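(* Let $d=(d_1,\dots,d_n)$ (with $n\ge 1$) be a degree sequence and $\overline d=(\overline d_1,\dots,\overline d_n)=(n-1-d_n,\dots,n-1-d_1)$ its complementary sequence. Then $n\le m(d)+m(\overline d)\le n+1$. Moreover $m(d)+m(\overline d)=n+1$ if and only if $d_{m(d)}=m(d)-1$.
   Context: Degree sequences (of finite simple graphs, terms may be $0$) are listed in nonincreasing order. For such a sequence $d$, $m(d)=\max\{i : d_i\ge i-1\}$. *)

theory Defs
  imports Main
begin

text \<open>Sequences are lists; the paper's d_i (1-based) is d ! (i-1).
  A degree sequence: nonincreasing and realized by a finite simple graph
  on vertex set {0..<n}, vertex i having degree d ! i.\<close>

definition nonincreasing :: "nat list \<Rightarrow> bool" where
  "nonincreasing d \<longleftrightarrow> (\<forall>i j. i \<le> j \<longrightarrow> j < length d \<longrightarrow> d ! j \<le> d ! i)"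

definition graphic :: "nat list \<Rightarrow> bool" where
  "graphic d \<longleftrightarrow> (\<exists>E :: nat \<Rightarrow> nat \<Rightarrow> bool.
      (\<forall>i j. E i j \<longrightarrow> E j i) \<and> (\<forall>i. \<not> E i i) \<and>
      (\<forall>i < length d. d ! i = card {j. j < length d \<and> E i j}))"

definition degree_sequence :: "nat list \<Rightarrow> bool" where
  "degree_sequence d \<longleftrightarrow> nonincreasing d \<and> graphic d"

definition mval :: "nat list \<Rightarrow> nat" where
  "mval d = Max {i. 1 \<le> i \<and> i \<le> length d \<and> d ! (i - 1) \<ge> i - 1}"

definition compl_seq :: "nat list \<Rightarrow> nat list" where
  "compl_seq d = rev (map (\<lambda>x. length d - 1 - x) d)"

end

theory Submission
  imports Defs
begin

text \<open>Only two properties of a degree sequence d of length n matter: it is nonincreasing and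
  every entry is at most n - 1. Then dbar_i \<ge> i - 1 exactly when d_p \<le> p - 1 for p = n + 1 - i,
  so m(dbar) = n + 1 - p for the first position p with d_p \<le> p - 1. With m = m(d), monotonicity
  puts p at m when d_m = m - 1, giving m(dbar) = n + 1 - m, and at m + 1 otherwise, giving
  m(dbar) = n - m.\<close>

lemma graphic_nth_le:
  assumes "graphic d" "i < length d"
  shows "d ! i \<le> length d - 1"
proof -
  obtain E where irrefl: "\<forall>i. \<not> E i i"
    and deg: "\<forall>i < length d. d ! i = card {j. j < length d \<and> E i j}"
    using assms(1) unfolding graphic_def by blast
  have "{j. j < length d \<and> E i j} \<subseteq> {0..<length d} - {i}"
    using irrefl by auto
  then have "card {j. j < length d \<and> E i j} \<le> card ({0..<length d} - {i})"
    by (intro card_mono) auto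
  also have "\<dots> = length d - 1"
    using assms(2) by simp
  finally show ?thesis
    using deg assms(2) by simp
qed

lemma mval_eqI:
  assumes "1 \<le> k" "k \<le> length d" "k - 1 \<le> d ! (k - 1)"
    and "\<And>i. k < i \<Longrightarrow> i \<le> length d \<Longrightarrow> d ! (i - 1) < i - 1"
  shows "mval d = k"
  unfolding mval_def
proof (rule Max_eqI)
  show "finite {i. 1 \<le> i \<and> i \<le> length d \<and> i - 1 \<le> d ! (i - 1)}"
    by simp
qed (use assms in \<open>force simp: not_less[symmetric]\<close>)+

lemma mval_bounds:
  assumes "1 \<le> length d"
  shows "1 \<le> mval d" "mval d \<le> length d" "mval d - 1 \<le> d ! (mval d - 1)"
proof -
  let ?S = "{i. 1 \<le> i \<and> i \<le> length d \<and> i - 1 \<le> d ! (i - 1)}"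
  have "1 \<in> ?S"
    using assms by simp
  then have "Max ?S \<in> ?S"
    by (intro Max_in) auto
  then show "1 \<le> mval d" "mval d \<le> length d" "mval d - 1 \<le> d ! (mval d - 1)"
    unfolding mval_def by auto
qed

lemma mval_maximal:
  assumes "mval d < i" "i \<le> length d"
  shows "d ! (i - 1) < i - 1"
proof (rule ccontr)
  assume "\<not> d ! (i - 1) < i - 1"
  with assms have "i \<le> mval d"
    unfolding mval_def by (intro Max_ge) auto
  with assms(1) show False
    by simp
qed

lemma length_compl_seq [simp]: "length (compl_seq d) = length d"
  by (simp add: compl_seq_def)

lemma compl_seq_nth_ge_iff:
  assumes bounded: "\<forall>j < length d. d ! j \<le> length d - 1"
    and "1 \<le> i" "i \<le> length d"
  shows "i - 1 \<le> compl_seq d ! (i - 1) \<longleftrightarrow> d ! (length d - i) \<le> length d - i"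
proof -
  have "compl_seq d ! (i - 1) = length d - 1 - d ! (length d - i)"
    using assms(2,3) by (simp add: compl_seq_def rev_nth)
  moreover have "d ! (length d - i) \<le> length d - 1"
    using bounded assms(2,3) by simp
  ultimately show ?thesis
    using assms(2,3) by linarith
qed

lemma mval_compl_seq_eqI:
  assumes bounded: "\<forall>j < length d. d ! j \<le> length d - 1"
    and "1 \<le> k" "k \<le> length d" "d ! (length d - k) \<le> length d - k"
    and above_diag: "\<And>j. j < length d - k \<Longrightarrow> j < d ! j"
  shows "mval (compl_seq d) = k"
proof (rule mval_eqI)
  show "k - 1 \<le> compl_seq d ! (k - 1)"
    using compl_seq_nth_ge_iff[OF bounded] assms(2-4) by simp
next
  fix i
  assume "k < i" "i \<le> length (compl_seq d)"
  then have "length d - i < d ! (length d - i)"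
    using above_diag assms(3) by simp
  with \<open>k < i\<close> \<open>i \<le> length (compl_seq d)\<close> show "compl_seq d ! (i - 1) < i - 1"
    using compl_seq_nth_ge_iff[OF bounded, of i] assms(2) by simp
qed (use assms in simp_all)

lemma mval_compl_seq:
  assumes "1 \<le> length d" "nonincreasing d"
    and bounded: "\<forall>j < length d. d ! j \<le> length d - 1"
  shows "mval (compl_seq d) =
    (if d ! (mval d - 1) = mval d - 1 then length d + 1 - mval d else length d - mval d)"
proof -
  define n m where "n = length d" and "m = mval d"
  note m = mval_bounds[OF assms(1), folded m_def n_def]
  have mono: "d ! (m - 1) \<le> d ! j" if "j \<le> m - 1" for j
    using assms(2) that m unfolding nonincreasing_def n_def by auto
  show ?thesis
  proof (cases "d ! (m - 1) = m - 1")
    case True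
    have "j < d ! j" if "j < m - 1" for j
      using mono[of j] True that by linarith
    with m True have "mval (compl_seq d) = n + 1 - m"
      unfolding n_def by (intro mval_compl_seq_eqI[OF bounded]) auto
    with True show ?thesis
      by (simp add: n_def m_def)
  next
    case False
    with m have above: "m \<le> d ! (m - 1)"
      by simp
    have "m < n"
      using above m bounded[rule_format, of "m - 1"] unfolding n_def by linarith
    moreover have "d ! m < m"
      using mval_maximal[of d "m + 1"] \<open>m < n\<close> by (simp add: n_def m_def)
    moreover have "j < d ! j" if "j < m" for j
      using mono[of j] above that by linarith
    ultimately have "mval (compl_seq d) = n - m"
      unfolding n_def by (intro mval_compl_seq_eqI[OF bounded]) auto
    with False show ?thesis
      by (simp add: n_def m_def)
  qed
qed

theorem lemma5:
  fixes d :: "nat list"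
  assumes "length d \<ge> 1" and "degree_sequence d"
  shows "length d \<le> mval d + mval (compl_seq d)
       \<and> mval d + mval (compl_seq d) \<le> length d + 1
       \<and> (mval d + mval (compl_seq d) = length d + 1 \<longleftrightarrow> d ! (mval d - 1) = mval d - 1)"
proof -
  have "\<forall>j < length d. d ! j \<le> length d - 1"
    using assms(2) graphic_nth_le unfolding degree_sequence_def by blast
  then have "mval (compl_seq d) =
      (if d ! (mval d - 1) = mval d - 1 then length d + 1 - mval d else length d - mval d)"
    using assms mval_compl_seq unfolding degree_sequence_def by blast
  moreover have "mval d \<le> length d"
    using mval_bounds(2)[OF assms(1)] .
  ultimately show ?thesis
    by auto
qed

end
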